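(* Let $\epsilon>0$. For any two quantum states $\rho,\sigma$ on a finite-dimensional Hilbert space $H_A$, \[ n^{\star}_{\mathrm B,\epsilon}(\rho,\sigma,0.5,0.1)\le\left(\frac{e^\epsilon+1}{e^\epsilon-1}\right)^2\frac{2\log 5}{E_1(\rho\|\sigma)^2}. \]
   Context: All Hilbert spaces are finite-dimensional, $\log$ is natural, $a/0=+\infty$ for $a>0$. $E_\gamma(\rho\|\sigma)=\mathrm{Tr}(\rho-\gamma\sigma)_+$ (positive part); in particular $E_1(\rho\|\sigma)=\frac12\|\rho-\sigma\|_1$. For $p\in(0,1)$, $p_e(\rho,\sigma,p):=p-pE_{(1-p)/p}(\rho\|\sigma)$ and $n^{\star}_{\mathrm B}(\rho,\sigma,p,\delta):=\inf\{n\in\mathbb N:p_e(\rho^{\otimes n},\sigma^{\otimes n},p)\le\delta\}$. For $\epsilon\ge0$, a quantum channel (CPTP map) $\mathcal A$ from operators on $H_A$ to operators on some finite-dimensional $H_B$ is $\epsilon$-locally differentially private ($\mathcal A\in\mathrm{LDP}_\epsilon$) if $E_{e^\epsilon}(\mathcal A(\rho)\|\mathcal A(\sigma))=0$ for all states $\rho,\sigma$ on $H_A$. Then $n^{\star}_{\mathrm B,\epsilon}(\rho,\sigma,p,\delta):=\inf_{\mathcal A\in\mathrm{LDP}_\epsilon} n^{\star}_{\mathrm B}(\mathcal A(\rho),\mathcal A(\sigma),p,\delta)$, the infimum over all such channels with arbitrary finite-dimensional output. *)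

theory Defs
  imports "Jordan_Normal_Form.Schur_Decomposition" "HOL-Library.Extended_Real"
begin

text \<open>Operators on a d-dimensional Hilbert space are complex d x d matrices
  (elements of carrier_mat d d).\<close>

definition mtrace :: "complex mat \<Rightarrow> complex" where
  "mtrace A = (\<Sum>i<dim_row A. A $$ (i, i))"

definition hermitian :: "complex mat \<Rightarrow> bool" where
  "hermitian A \<longleftrightarrow> A \<in> carrier_mat (dim_row A) (dim_row A) \<and> mat_adjoint A = A"

definition psd :: "complex mat \<Rightarrow> bool" where
  "psd A \<longleftrightarrow> hermitian A \<and>
     (\<forall>v \<in> carrier_vec (dim_row A). Im (conjugate v \<bullet> (A *\<^sub>v v)) = 0
                                    \<and> Re (conjugate v \<bullet> (A *\<^sub>v v)) \<ge> 0)"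

definition density_op :: "nat \<Rightarrow> complex mat \<Rightarrow> bool" where
  "density_op d \<rho> \<longleftrightarrow> \<rho> \<in> carrier_mat d d \<and> psd \<rho> \<and> mtrace \<rho> = 1"

definition unitary_mat :: "nat \<Rightarrow> complex mat \<Rightarrow> bool" where
  "unitary_mat d U \<longleftrightarrow> U \<in> carrier_mat d d \<and> U * mat_adjoint U = 1\<^sub>m d
                        \<and> mat_adjoint U * U = 1\<^sub>m d"

definition real_diag_mat :: "nat \<Rightarrow> (nat \<Rightarrow> real) \<Rightarrow> complex mat" where
  "real_diag_mat d f = mat d d (\<lambda>(i, j). if i = j then complex_of_real (f i) else 0)"

definition pos_part :: "complex mat \<Rightarrow> complex mat" where
  "pos_part A = (SOME P. \<exists>U lam. unitary_mat (dim_row A) U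
        \<and> A = U * real_diag_mat (dim_row A) lam * mat_adjoint U
        \<and> P = U * real_diag_mat (dim_row A) (\<lambda>i. max (lam i) 0) * mat_adjoint U)"

definition E_div :: "real \<Rightarrow> complex mat \<Rightarrow> complex mat \<Rightarrow> real" where
  "E_div \<gamma> \<rho> \<sigma> = Re (mtrace (pos_part (\<rho> - complex_of_real \<gamma> \<cdot>\<^sub>m \<sigma>)))"

definition kron :: "complex mat \<Rightarrow> complex mat \<Rightarrow> complex mat" where
  "kron A B = mat (dim_row A * dim_row B) (dim_col A * dim_col B)
     (\<lambda>(i, j). A $$ (i div dim_row B, j div dim_col B) * B $$ (i mod dim_row B, j mod dim_col B))"

fun tensor_pow :: "complex mat \<Rightarrow> nat \<Rightarrow> complex mat" where
  "tensor_pow A 0 = 1\<^sub>m 1"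
| "tensor_pow A (Suc n) = kron (tensor_pow A n) A"

definition p_err :: "complex mat \<Rightarrow> complex mat \<Rightarrow> real \<Rightarrow> real" where
  "p_err \<rho> \<sigma> p = p - p * E_div ((1 - p) / p) \<rho> \<sigma>"

text \<open>Bayesian sample complexity (infimum over the naturals; Inf of the empty set is +infinity).\<close>
definition n_B :: "complex mat \<Rightarrow> complex mat \<Rightarrow> real \<Rightarrow> real \<Rightarrow> ereal" where
  "n_B \<rho> \<sigma> p \<delta> = (INF n \<in> {n::nat. p_err (tensor_pow \<rho> n) (tensor_pow \<sigma> n) p \<le> \<delta>}. ereal (real n))"

text \<open>Quantum channels. A map Phi from operators on C^dA to operators on C^dB.
  The (i,j) block (size dA x dA) of a (k*dA) x (k*dA) matrix, and the action
  of id_k (x) Phi on such a matrix.\<close>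
definition block_of :: "nat \<Rightarrow> complex mat \<Rightarrow> nat \<Rightarrow> nat \<Rightarrow> complex mat" where
  "block_of dA X a b = mat dA dA (\<lambda>(r, s). X $$ (a * dA + r, b * dA + s))"

definition ampliate :: "nat \<Rightarrow> nat \<Rightarrow> nat \<Rightarrow> (complex mat \<Rightarrow> complex mat) \<Rightarrow> complex mat \<Rightarrow> complex mat" where
  "ampliate k dA dB \<Phi> X = mat (k * dB) (k * dB)
     (\<lambda>(i, j). \<Phi> (block_of dA X (i div dB) (j div dB)) $$ (i mod dB, j mod dB))"

definition linear_map_on :: "nat \<Rightarrow> nat \<Rightarrow> (complex mat \<Rightarrow> complex mat) \<Rightarrow> bool" where
  "linear_map_on dA dB \<Phi> \<longleftrightarrow>
     (\<forall>X \<in> carrier_mat dA dA. \<Phi> X \<in> carrier_mat dB dB) \<and>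
     (\<forall>X \<in> carrier_mat dA dA. \<forall>Y \<in> carrier_mat dA dA. \<forall>a b :: complex.
        \<Phi> (a \<cdot>\<^sub>m X + b \<cdot>\<^sub>m Y) = a \<cdot>\<^sub>m \<Phi> X + b \<cdot>\<^sub>m \<Phi> Y)"

definition completely_positive :: "nat \<Rightarrow> nat \<Rightarrow> (complex mat \<Rightarrow> complex mat) \<Rightarrow> bool" where
  "completely_positive dA dB \<Phi> \<longleftrightarrow>
     (\<forall>k. \<forall>X \<in> carrier_mat (k * dA) (k * dA). psd X \<longrightarrow> psd (ampliate k dA dB \<Phi> X))"

definition trace_preserving :: "nat \<Rightarrow> (complex mat \<Rightarrow> complex mat) \<Rightarrow> bool" where
  "trace_preserving dA \<Phi> \<longleftrightarrow> (\<forall>X \<in> carrier_mat dA dA. mtrace (\<Phi> X) = mtrace X)"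

definition cptp :: "nat \<Rightarrow> nat \<Rightarrow> (complex mat \<Rightarrow> complex mat) \<Rightarrow> bool" where
  "cptp dA dB \<Phi> \<longleftrightarrow> linear_map_on dA dB \<Phi> \<and> completely_positive dA dB \<Phi> \<and> trace_preserving dA \<Phi>"

definition LDP :: "real \<Rightarrow> nat \<Rightarrow> nat \<Rightarrow> (complex mat \<Rightarrow> complex mat) \<Rightarrow> bool" where
  "LDP \<epsilon> dA dB \<Phi> \<longleftrightarrow> cptp dA dB \<Phi> \<and>
     (\<forall>\<rho> \<sigma>. density_op dA \<rho> \<longrightarrow> density_op dA \<sigma> \<longrightarrow> E_div (exp \<epsilon>) (\<Phi> \<rho>) (\<Phi> \<sigma>) = 0)"

definition n_B_priv :: "real \<Rightarrow> nat \<Rightarrow> complex mat \<Rightarrow> complex mat \<Rightarrow> real \<Rightarrow> real \<Rightarrow> ereal" where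
  "n_B_priv \<epsilon> dA \<rho> \<sigma> p \<delta> =
     (INF (dB, \<Phi>) \<in> {(dB, \<Phi>). LDP \<epsilon> dA dB \<Phi>}. n_B (\<Phi> \<rho>) (\<Phi> \<sigma>) p \<delta>)"

end

theory Submission
  imports Defs "Jordan_Normal_Form.Spectral_Radius"
begin

text \<open>Measure \<rho> and \<sigma> in an eigenbasis of \<rho> - \<sigma> (the Helstrom measurement) and pass the
  one-bit answer "the eigenvalue is positive" through randomized response, which keeps the bit
  with probability e^\<epsilon> / (e^\<epsilon> + 1). Every output probability of this channel is a mixture of
  the two numbers e^\<epsilon> / (e^\<epsilon> + 1) and 1 / (e^\<epsilon> + 1), so the channel is \<epsilon>-LDP. It maps \<rho>
  and \<sigma> to diagonal states p, q on a qubit with p_0 - q_0 = t = (e^\<epsilon> - 1) / (e^\<epsilon> + 1) E_1(\<rho>||\<sigma>).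
  For m copies the Bayes error with equal priors is at most half the Bhattacharyya coefficient
  (\<surd>(p_0 q_0) + \<surd>(p_1 q_1))^m \<le> (1 - t^2)^(m/2), and this is at most 1/5 for
  m = \<lfloor>2 ln 5 / t^2\<rfloor>.

  Since pos_part picks an arbitrary spectral decomposition, two further facts are needed: the
  spectral theorem for Hermitian matrices (by deflation with Householder reflections), and that
  for a diagonal matrix every choice gives the sum of the positive diagonal entries as trace of the
  positive part, because the diagonal and the eigenvalues are related by a doubly stochastic
  matrix in both directions.\<close>

lemma mat_mult_entry_sum:
  assumes "A \<in> carrier_mat n m" "B \<in> carrier_mat m p" "i < n" "j < p"
  shows "(A * B) $$ (i, j) = (\<Sum>k<m. A $$ (i, k) * B $$ (k, j))"
  using assms by (auto simp: scalar_prod_def atLeast0LessThan intro!: sum.cong)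

lemma mult_mat_vec_entry_sum:
  assumes "A \<in> carrier_mat n m" "v \<in> carrier_vec m" "i < n"
  shows "(A *\<^sub>v v) $ i = (\<Sum>k<m. A $$ (i, k) * v $ k)"
  using assms by (auto simp: scalar_prod_def atLeast0LessThan intro!: sum.cong)

lemma quadratic_form_sum:
  assumes "A \<in> carrier_mat n n" "v \<in> carrier_vec n"
  shows "conjugate v \<bullet> (A *\<^sub>v v) = (\<Sum>p<n. \<Sum>q<n. cnj (v $ p) * A $$ (p, q) * v $ q)"
  using assms
  by (auto simp: scalar_prod_def atLeast0LessThan mult_mat_vec_entry_sum sum_distrib_left mult.assoc
      intro!: sum.cong)

lemma sum_lessThan_mult_split:
  fixes f :: "nat \<Rightarrow> 'a::comm_monoid_add"
  shows "(\<Sum>x<k * m. f x) = (\<Sum>a<k. \<Sum>s<m. f (a * m + s))"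
  by (simp add: sum.nat_group[symmetric] sum.shift_bounds_nat_ivl[of f 0 _ m, simplified]
      atLeast0LessThan add.commute)

lemma mat_adjoint_carrier: "A \<in> carrier_mat n m \<Longrightarrow> mat_adjoint A \<in> carrier_mat m n"
  by (auto simp: mat_adjoint_def)

lemma mat_adjoint_entry:
  "A \<in> carrier_mat n m \<Longrightarrow> i < m \<Longrightarrow> j < n \<Longrightarrow> mat_adjoint A $$ (i, j) = cnj (A $$ (j, i))"
  by (auto simp: mat_adjoint_def mat_of_rows_def)

lemma mat_adjoint_mult:
  fixes A B :: "complex mat"
  assumes A: "A \<in> carrier_mat n m" and B: "B \<in> carrier_mat m p"
  shows "mat_adjoint (A * B) = mat_adjoint B * mat_adjoint A"
proof (rule eq_matI)
  fix i j assume "i < dim_row (mat_adjoint B * mat_adjoint A)" "j < dim_col (mat_adjoint B * mat_adjoint A)"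
  then have ij: "i < p" "j < n" using mat_adjoint_carrier[OF A] mat_adjoint_carrier[OF B] by auto
  have AB: "A * B \<in> carrier_mat n p" using A B by auto
  show "mat_adjoint (A * B) $$ (i, j) = (mat_adjoint B * mat_adjoint A) $$ (i, j)"
    using ij by (simp add: mat_adjoint_entry[OF AB] mat_adjoint_entry[OF A] mat_adjoint_entry[OF B]
        mat_mult_entry_sum[OF mat_adjoint_carrier[OF B] mat_adjoint_carrier[OF A] ij]
        mat_mult_entry_sum[OF A B] mult.commute)
qed (use mat_adjoint_carrier[OF A] mat_adjoint_carrier[OF B] mat_adjoint_carrier[of "A * B" n p] A B in auto)

lemma mat_adjoint_adjoint:
  fixes A :: "complex mat"
  assumes A: "A \<in> carrier_mat n m"
  shows "mat_adjoint (mat_adjoint A) = A"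
  using A mat_adjoint_carrier[OF A] mat_adjoint_carrier[OF mat_adjoint_carrier[OF A]]
  by (intro eq_matI) (auto simp: mat_adjoint_entry[OF mat_adjoint_carrier[OF A]] mat_adjoint_entry[OF A])

lemma hermitian_entry:
  fixes A :: "complex mat"
  assumes "A \<in> carrier_mat n n" "mat_adjoint A = A" "i < n" "j < n"
  shows "A $$ (i, j) = cnj (A $$ (j, i))"
  using mat_adjoint_entry[of A n n i j] assms by simp

lemma unitary_mat_carrier: "unitary_mat n U \<Longrightarrow> U \<in> carrier_mat n n"
  unfolding unitary_mat_def by auto

lemma unitary_mat_rows:
  assumes "unitary_mat n U" "i < n" "j < n"
  shows "(\<Sum>k<n. U $$ (i, k) * cnj (U $$ (j, k))) = (if i = j then 1 else 0)"
proof -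
  have U: "U \<in> carrier_mat n n" using assms(1) by (rule unitary_mat_carrier)
  have "(U * mat_adjoint U) $$ (i, j) = (\<Sum>k<n. U $$ (i, k) * cnj (U $$ (j, k)))"
    unfolding mat_mult_entry_sum[OF U mat_adjoint_carrier[OF U] assms(2,3)]
    using assms(2,3) by (simp add: mat_adjoint_entry[OF U])
  then show ?thesis using assms unfolding unitary_mat_def by auto
qed

lemma unitary_mat_cols:
  assumes "unitary_mat n U" "i < n" "j < n"
  shows "(\<Sum>k<n. cnj (U $$ (k, i)) * U $$ (k, j)) = (if i = j then 1 else 0)"
proof -
  have U: "U \<in> carrier_mat n n" using assms(1) by (rule unitary_mat_carrier)
  have "(mat_adjoint U * U) $$ (i, j) = (\<Sum>k<n. cnj (U $$ (k, i)) * U $$ (k, j))"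
    unfolding mat_mult_entry_sum[OF mat_adjoint_carrier[OF U] U assms(2,3)]
    using assms(2,3) by (simp add: mat_adjoint_entry[OF U])
  then show ?thesis using assms unfolding unitary_mat_def by auto
qed

lemma unitary_matI_cols:
  assumes U: "U \<in> carrier_mat n n"
    and cols: "\<And>i j. i < n \<Longrightarrow> j < n \<Longrightarrow> (\<Sum>k<n. cnj (U $$ (k, i)) * U $$ (k, j)) = (if i = j then 1 else 0)"
  shows "unitary_mat n U"
proof -
  have left: "mat_adjoint U * U = 1\<^sub>m n"
  proof (rule eq_matI)
    fix i j assume "i < dim_row (1\<^sub>m n)" "j < dim_col (1\<^sub>m n)"
    then have ij: "i < n" "j < n" by auto
    show "(mat_adjoint U * U) $$ (i, j) = 1\<^sub>m n $$ (i, j)"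
      unfolding mat_mult_entry_sum[OF mat_adjoint_carrier[OF U] U ij]
      using cols[OF ij] ij by (simp add: mat_adjoint_entry[OF U])
  qed (use U mat_adjoint_carrier[OF U] in auto)
  then have "U * mat_adjoint U = 1\<^sub>m n"
    by (rule mat_mult_left_right_inverse[OF mat_adjoint_carrier[OF U] U])
  with U left show ?thesis unfolding unitary_mat_def by auto
qed

lemma unitary_mat_mult:
  assumes U: "unitary_mat n U" and V: "unitary_mat n V"
  shows "unitary_mat n (U * V)"
proof -
  have Um: "U \<in> carrier_mat n n" and Vm: "V \<in> carrier_mat n n"
    using U V by (simp_all add: unitary_mat_carrier)
  have "mat_adjoint (U * V) * (U * V) = mat_adjoint V * (mat_adjoint U * U) * V"
    using Um Vm mat_adjoint_carrier[OF Um] mat_adjoint_carrier[OF Vm]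
    by (simp add: mat_adjoint_mult[OF Um Vm] assoc_mult_mat[of _ n n _ n _ n])
  also have "\<dots> = 1\<^sub>m n"
    using U V Vm mat_adjoint_carrier[OF Vm] unfolding unitary_mat_def by auto
  finally have left: "mat_adjoint (U * V) * (U * V) = 1\<^sub>m n" .
  have "(U * V) * mat_adjoint (U * V) = 1\<^sub>m n"
    by (rule mat_mult_left_right_inverse[OF mat_adjoint_carrier _ left]) (use Um Vm in auto)
  with left Um Vm show ?thesis unfolding unitary_mat_def by auto
qed

lemma cnj_mult_self: "cnj z * z = complex_of_real ((cmod z)\<^sup>2)"
  by (metis complex_norm_square mult.commute)

lemma mult_of_real_mult_cnj: "z * complex_of_real a * cnj z = complex_of_real ((cmod z)\<^sup>2 * a)"
proof -
  have "z * complex_of_real a * cnj z = complex_of_real a * (z * cnj z)" by (simp add: mult_ac)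
  also have "\<dots> = complex_of_real ((cmod z)\<^sup>2 * a)" by (simp only: complex_norm_square[symmetric] of_real_mult mult.commute)
  finally show ?thesis .
qed
lemma cnj_mult_of_real_mult: "cnj z * complex_of_real a * z = complex_of_real ((cmod z)\<^sup>2 * a)"
  using mult_of_real_mult_cnj[of z a] by (simp add: mult_ac)

lemma real_diag_mat_carrier[simp]: "real_diag_mat n f \<in> carrier_mat n n"
  by (simp add: real_diag_mat_def)

lemma real_diag_mat_entry:
  "i < n \<Longrightarrow> j < n \<Longrightarrow> real_diag_mat n f $$ (i, j) = (if i = j then complex_of_real (f i) else 0)"
  by (simp add: real_diag_mat_def)

lemma mat_adjoint_real_diag_mat: "mat_adjoint (real_diag_mat n f) = real_diag_mat n f"
proof (rule eq_matI)
  fix i j assume "i < dim_row (real_diag_mat n f)" "j < dim_col (real_diag_mat n f)"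
  then have ij: "i < n" "j < n" by (auto simp: real_diag_mat_def)
  show "mat_adjoint (real_diag_mat n f) $$ (i, j) = real_diag_mat n f $$ (i, j)"
    using ij by (simp add: mat_adjoint_entry[OF real_diag_mat_carrier] real_diag_mat_entry)
qed (use mat_adjoint_carrier[OF real_diag_mat_carrier, of n f] in \<open>auto simp: real_diag_mat_def\<close>)

lemma unitary_conj_real_diag_carrier:
  "U \<in> carrier_mat n n \<Longrightarrow> U * real_diag_mat n f * mat_adjoint U \<in> carrier_mat n n"
  by (meson mat_adjoint_carrier mult_carrier_mat real_diag_mat_carrier)

lemma unitary_conj_real_diag_entry:
  assumes U: "U \<in> carrier_mat n n" and i: "i < n" and j: "j < n"
  shows "(U * real_diag_mat n f * mat_adjoint U) $$ (i, j)
    = (\<Sum>k<n. U $$ (i, k) * complex_of_real (f k) * cnj (U $$ (j, k)))"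
proof -
  have UD: "(U * real_diag_mat n f) $$ (i, k) = U $$ (i, k) * complex_of_real (f k)" if k: "k < n" for k
  proof -
    have "(U * real_diag_mat n f) $$ (i, k) = (\<Sum>l<n. if l = k then U $$ (i, k) * complex_of_real (f k) else 0)"
      unfolding mat_mult_entry_sum[OF U real_diag_mat_carrier i k]
      using k by (intro sum.cong) (auto simp: real_diag_mat_entry)
    then show ?thesis using k by simp
  qed
  have "(U * real_diag_mat n f * mat_adjoint U) $$ (i, j)
      = (\<Sum>k<n. (U * real_diag_mat n f) $$ (i, k) * mat_adjoint U $$ (k, j))"
    by (rule mat_mult_entry_sum[OF _ mat_adjoint_carrier[OF U] i j]) (use U in auto)
  then show ?thesis using j by (simp add: UD mat_adjoint_entry[OF U])
qed

lemma mtrace_unitary_conj_real_diag: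
  assumes U: "unitary_mat n U"
  shows "mtrace (U * real_diag_mat n f * mat_adjoint U) = complex_of_real (\<Sum>k<n. f k)"
proof -
  have Um: "U \<in> carrier_mat n n" using U by (rule unitary_mat_carrier)
  have "mtrace (U * real_diag_mat n f * mat_adjoint U)
      = (\<Sum>i<n. \<Sum>k<n. U $$ (i, k) * complex_of_real (f k) * cnj (U $$ (i, k)))"
    unfolding mtrace_def using unitary_conj_real_diag_carrier[OF Um, of f]
    by (auto intro!: sum.cong simp: unitary_conj_real_diag_entry[OF Um])
  also have "\<dots> = (\<Sum>k<n. complex_of_real (f k) * (\<Sum>i<n. cnj (U $$ (i, k)) * U $$ (i, k)))"
    by (subst sum.swap) (simp add: sum_distrib_left mult_ac)
  also have "\<dots> = (\<Sum>k<n. complex_of_real (f k))"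
    using unitary_mat_cols[OF U] by simp
  finally show ?thesis by simp
qed

lemma unitary_mat_row_norm:
  assumes "unitary_mat n U" "k < n"
  shows "(\<Sum>i<n. (cmod (U $$ (k, i)))\<^sup>2) = 1"
proof -
  have "complex_of_real (\<Sum>i<n. (cmod (U $$ (k, i)))\<^sup>2) = 1"
    using unitary_mat_rows[OF assms(1) assms(2) assms(2)] by (simp flip: complex_norm_square)
  then show ?thesis by (simp only: of_real_eq_1_iff)
qed

lemma unitary_mat_col_norm:
  assumes "unitary_mat n U" "i < n"
  shows "(\<Sum>k<n. (cmod (U $$ (k, i)))\<^sup>2) = 1"
proof -
  have "complex_of_real (\<Sum>k<n. (cmod (U $$ (k, i)))\<^sup>2) = 1"
    using unitary_mat_cols[OF assms(1) assms(2) assms(2)] by (simp add: cnj_mult_self)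
  then show ?thesis by (simp only: of_real_eq_1_iff)
qed

lemma unitary_conj_real_diag_diag_entry:
  assumes "U \<in> carrier_mat n n" "k < n"
  shows "(U * real_diag_mat n f * mat_adjoint U) $$ (k, k)
    = complex_of_real (\<Sum>i<n. (cmod (U $$ (k, i)))\<^sup>2 * f i)"
  by (simp add: unitary_conj_real_diag_entry[OF assms assms(2)] mult_of_real_mult_cnj del: of_real_mult)

section \<open>The spectral theorem for Hermitian matrices\<close>

lemma householder_unitary:
  fixes w :: "nat \<Rightarrow> complex" and c :: complex
  assumes real: "cnj c = c" and norm: "c * c * (\<Sum>k<N. cnj (w k) * w k) = 2 * c"
  shows "unitary_mat N (mat N N (\<lambda>(i, j). (if i = j then 1 else 0) - c * w i * cnj (w j)))"
    (is "unitary_mat N ?V")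
proof (rule unitary_matI_cols)
  fix i j assume i: "i < N" and j: "j < N"
  let ?S = "\<Sum>k<N. cnj (w k) * w k"
  have "(\<Sum>k<N. cnj (?V $$ (k, i)) * ?V $$ (k, j))
      = (\<Sum>k<N. (if k = i then (if i = j then 1 else 0) else 0) - (if k = i then c * w i * cnj (w j) else 0)
               - (if k = j then c * cnj (w j) * w i else 0) + c * c * w i * cnj (w j) * (cnj (w k) * w k))"
    using i j real by (intro sum.cong refl) (auto simp: algebra_simps)
  also have "\<dots> = (if i = j then 1 else 0) - c * w i * cnj (w j) - c * cnj (w j) * w i
      + c * c * w i * cnj (w j) * ?S"
    using i j by (simp add: sum.distrib sum_subtractf sum_distrib_left)
  also have "\<dots> = (if i = j then 1 else 0) + w i * cnj (w j) * (c * c * ?S - 2 * c)"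
    by (simp add: algebra_simps)
  finally show "(\<Sum>k<N. cnj (?V $$ (k, i)) * ?V $$ (k, j)) = (if i = j then 1 else 0)"
    using norm by simp
qed simp

lemma unitary_mat_with_first_col:
  fixes y :: "nat \<Rightarrow> complex"
  assumes norm: "(\<Sum>i<Suc n. cnj (y i) * y i) = 1" and y0: "y 0 = complex_of_real r"
  obtains V where "unitary_mat (Suc n) V" "\<forall>i<Suc n. V $$ (i, 0) = y i"
proof -
  define w where "w i = (if i = 0 then 1 else 0) - y i" for i
  \<comment> \<open>for r = 1 the vector y is the first unit vector and c = 0 makes V the identity\<close>
  define c :: complex where "c = (if r = 1 then 0 else 1 / (1 - r))"
  define V where "V = mat (Suc n) (Suc n) (\<lambda>(i, j). (if i = j then 1 else 0) - c * w i * cnj (w j))"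
  have tail: "(\<Sum>i<n. cnj (y (Suc i)) * y (Suc i)) = 1 - complex_of_real (r\<^sup>2)"
    using norm y0 unfolding sum.lessThan_Suc_shift by (simp add: power2_eq_square algebra_simps)
  have "c * c * (\<Sum>k<Suc n. cnj (w k) * w k) = 2 * c"
  proof (cases "r = 1")
    case False
    have S: "(\<Sum>k<Suc n. cnj (w k) * w k) = 2 * (1 - r)"
      using tail y0 unfolding sum.lessThan_Suc_shift by (simp add: w_def power2_eq_square algebra_simps)
    have "1 - complex_of_real r \<noteq> 0" using False by (metis eq_iff_diff_eq_0 of_real_eq_1_iff)
    then have "c * (1 - r) = 1" using False by (simp add: c_def)
    moreover have "c * c * (2 * (1 - r)) = 2 * c * (c * (1 - r))" by (simp add: algebra_simps)
    ultimately show ?thesis unfolding S by simp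
  qed (simp add: c_def)
  then have "unitary_mat (Suc n) V"
    unfolding V_def by (intro householder_unitary) (simp_all add: c_def)
  moreover have "\<forall>i<Suc n. V $$ (i, 0) = y i"
  proof (intro allI impI)
    fix i assume i: "i < Suc n"
    show "V $$ (i, 0) = y i"
    proof (cases "r = 1")
      case True
      have "(\<Sum>i<n. complex_of_real ((cmod (y (Suc i)))\<^sup>2)) = 0"
        using tail True by (simp add: cnj_mult_self)
      then have "(\<Sum>i<n. (cmod (y (Suc i)))\<^sup>2) = 0"
        by (metis of_real_eq_0_iff of_real_sum)
      then have "y (Suc k) = 0" if "k < n" for k
        using that by (subst (asm) sum_nonneg_eq_0_iff) auto
      then show ?thesis using i True y0 by (cases i) (auto simp: V_def w_def c_def)
    next
      case False
      then show ?thesis using i y0 by (simp add: V_def w_def c_def field_simps)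
    qed
  qed
  ultimately show ?thesis using that by blast
qed

lemma unit_eigenvector_real_head:
  fixes A :: "complex mat"
  assumes A: "A \<in> carrier_mat (Suc n) (Suc n)"
  obtains y r \<mu> where "(\<Sum>i<Suc n. cnj (y i) * y i) = 1" "y 0 = complex_of_real r"
    "\<forall>k<Suc n. (\<Sum>l<Suc n. A $$ (k, l) * y l) = \<mu> * y k"
proof -
  from spectrum_non_empty[OF A] obtain \<mu> where "\<mu> \<in> spectrum A" by auto
  then obtain v where v: "v \<in> carrier_vec (Suc n)" and v0: "v \<noteq> 0\<^sub>v (Suc n)" and ev: "A *\<^sub>v v = \<mu> \<cdot>\<^sub>v v"
    unfolding spectrum_def eigenvalue_def eigenvector_def using A by auto
  obtain i0 where i0: "i0 < Suc n" "v $ i0 \<noteq> 0"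
    using v v0 by (metis eq_vecI carrier_vecD index_zero_vec(1,2))
  define s where "s = (\<Sum>i<Suc n. (cmod (v $ i))\<^sup>2)"
  have s: "0 < s" unfolding s_def using i0 by (intro sum_pos2[of _ i0]) auto
  define \<gamma> :: complex where "\<gamma> = (if v $ 0 = 0 then 1 else cnj (v $ 0) / cmod (v $ 0))"
  have \<gamma>: "cnj \<gamma> * \<gamma> = 1" "\<gamma> * v $ 0 = cmod (v $ 0)"
    by (auto simp: \<gamma>_def cnj_mult_self norm_divide power2_eq_square)
  define y where "y i = \<gamma> * v $ i / sqrt s" for i
  have "complex_of_real (sqrt s) * complex_of_real (sqrt s) = complex_of_real s"
    using s by (simp flip: of_real_mult)
  then have "(\<Sum>i<Suc n. cnj (y i) * y i) = (\<Sum>i<Suc n. (cnj \<gamma> * \<gamma>) * (cnj (v $ i) * v $ i) / s)"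
    by (intro sum.cong refl) (simp add: y_def mult_ac)
  also have "\<dots> = (cnj \<gamma> * \<gamma>) * (\<Sum>i<Suc n. cnj (v $ i) * v $ i) / s"
    by (simp only: sum_divide_distrib sum_distrib_left)
  also have "(\<Sum>i<Suc n. cnj (v $ i) * v $ i) = s"
    by (simp add: cnj_mult_self s_def)
  finally have "(\<Sum>i<Suc n. cnj (y i) * y i) = 1"
    using s by (simp add: \<gamma>(1))
  moreover have "y 0 = complex_of_real (cmod (v $ 0) / sqrt s)"
    by (simp add: y_def \<gamma>)
  moreover have "\<forall>k<Suc n. (\<Sum>l<Suc n. A $$ (k, l) * y l) = \<mu> * y k"
  proof (intro allI impI)
    fix k assume k: "k < Suc n"
    have "(\<Sum>l<Suc n. A $$ (k, l) * y l) = \<gamma> / sqrt s * (A *\<^sub>v v) $ k"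
      by (simp add: y_def mult_mat_vec_entry_sum[OF A v k] sum_distrib_left algebra_simps)
    then show "(\<Sum>l<Suc n. A $$ (k, l) * y l) = \<mu> * y k" using ev k v by (simp add: y_def)
  qed
  ultimately show ?thesis using that by blast
qed

lemma unitary_conj_first_eigencol:
  fixes A V :: "complex mat"
  assumes A: "A \<in> carrier_mat N N" "mat_adjoint A = A" and V: "unitary_mat N V" and N: "0 < N"
    and ev: "\<And>k. k < N \<Longrightarrow> (\<Sum>l<N. A $$ (k, l) * V $$ (l, 0)) = \<mu> * V $$ (k, 0)"
  defines "B \<equiv> mat_adjoint V * A * V"
  shows "B \<in> carrier_mat N N" "mat_adjoint B = B" "\<mu> = complex_of_real (Re \<mu>)"
    "\<And>i. i < N \<Longrightarrow> B $$ (i, 0) = (if i = 0 then \<mu> else 0)"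
    "\<And>j. j < N \<Longrightarrow> B $$ (0, j) = (if j = 0 then \<mu> else 0)"
proof -
  have Vm: "V \<in> carrier_mat N N" using V by (rule unitary_mat_carrier)
  note Va = mat_adjoint_carrier[OF Vm]
  show Bm: "B \<in> carrier_mat N N" unfolding B_def using Vm Va A by auto
  have B_AV: "B = mat_adjoint V * (A * V)" unfolding B_def using Vm Va A
    by (simp add: assoc_mult_mat[of _ N N _ N _ N])
  have "mat_adjoint B = mat_adjoint (A * V) * mat_adjoint (mat_adjoint V)"
    unfolding B_AV by (rule mat_adjoint_mult[OF Va]) (use A Vm in auto)
  also have "\<dots> = B"
    using A Vm by (simp add: B_def mat_adjoint_mult[OF A(1) Vm] mat_adjoint_adjoint[OF Vm])
  finally show hB: "mat_adjoint B = B" .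
  show col: "B $$ (i, 0) = (if i = 0 then \<mu> else 0)" if i: "i < N" for i
  proof -
    have "B $$ (i, 0) = (\<Sum>k<N. mat_adjoint V $$ (i, k) * (A * V) $$ (k, 0))"
      unfolding B_AV by (rule mat_mult_entry_sum[OF Va _ i N]) (use A Vm in auto)
    also have "\<dots> = \<mu> * (\<Sum>k<N. cnj (V $$ (k, i)) * V $$ (k, 0))"
      using i N ev
      by (simp add: mat_mult_entry_sum[OF A(1) Vm] mat_adjoint_entry[OF Vm] sum_distrib_left algebra_simps)
    finally show ?thesis using unitary_mat_cols[OF V i N] by simp
  qed
  have "\<mu> = cnj \<mu>"
    using hermitian_entry[OF Bm hB N N] col[OF N] by simp
  then show real: "\<mu> = complex_of_real (Re \<mu>)"
    by (metis Reals_cnj_iff of_real_Re)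
  show "B $$ (0, j) = (if j = 0 then \<mu> else 0)" if j: "j < N" for j
    using hermitian_entry[OF Bm hB N j] col[OF j] real by (auto simp: complex_eq_iff)
qed

lemma unitary_mat_four_block_one:
  assumes U: "unitary_mat n U"
  shows "unitary_mat (Suc n) (four_block_mat (1\<^sub>m 1) (0\<^sub>m 1 n) (0\<^sub>m n 1) U)"
    (is "unitary_mat _ ?W")
proof (rule unitary_matI_cols)
  have Um: "U \<in> carrier_mat n n" using U by (rule unitary_mat_carrier)
  then show "?W \<in> carrier_mat (Suc n) (Suc n)" by auto
  fix i j assume i: "i < Suc n" and j: "j < Suc n"
  show "(\<Sum>k<Suc n. cnj (?W $$ (k, i)) * ?W $$ (k, j)) = (if i = j then 1 else 0)"
    using i j Um unfolding sum.lessThan_Suc_shift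
    by (cases i; cases j) (auto simp: unitary_mat_cols[OF U])
qed

lemma four_block_one_conj_real_diag:
  fixes B U :: "complex mat"
  assumes B: "B \<in> carrier_mat (Suc n) (Suc n)"
    and col: "\<And>i. i < Suc n \<Longrightarrow> B $$ (i, 0) = (if i = 0 then complex_of_real m else 0)"
    and row: "\<And>j. j < Suc n \<Longrightarrow> B $$ (0, j) = (if j = 0 then complex_of_real m else 0)"
    and U: "U \<in> carrier_mat n n"
    and lower: "mat n n (\<lambda>(i, j). B $$ (Suc i, Suc j)) = U * real_diag_mat n lam * mat_adjoint U"
  defines "W \<equiv> four_block_mat (1\<^sub>m 1) (0\<^sub>m 1 n) (0\<^sub>m n 1) U"
  shows "B = W * real_diag_mat (Suc n) (\<lambda>i. if i = 0 then m else lam (i - 1)) * mat_adjoint W"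
proof (rule eq_matI)
  have W: "W \<in> carrier_mat (Suc n) (Suc n)" unfolding W_def using U by auto
  then show "dim_row B = dim_row (W * real_diag_mat (Suc n) (\<lambda>i. if i = 0 then m else lam (i - 1)) * mat_adjoint W)"
    "dim_col B = dim_col (W * real_diag_mat (Suc n) (\<lambda>i. if i = 0 then m else lam (i - 1)) * mat_adjoint W)"
    using B mat_adjoint_carrier[OF W] by auto
  fix i j assume "i < dim_row (W * real_diag_mat (Suc n) (\<lambda>i. if i = 0 then m else lam (i - 1)) * mat_adjoint W)"
    "j < dim_col (W * real_diag_mat (Suc n) (\<lambda>i. if i = 0 then m else lam (i - 1)) * mat_adjoint W)"
  then have i: "i < Suc n" and j: "j < Suc n" using W mat_adjoint_carrier[OF W] by auto
  have lower_entry: "B $$ (Suc i', Suc j') = (\<Sum>k<n. U $$ (i', k) * complex_of_real (lam k) * cnj (U $$ (j', k)))"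
    if "i' < n" "j' < n" for i' j'
    using arg_cong[OF lower, of "\<lambda>M. M $$ (i', j')"] that
    by (simp add: unitary_conj_real_diag_entry[OF U])
  show "B $$ (i, j) = (W * real_diag_mat (Suc n) (\<lambda>i. if i = 0 then m else lam (i - 1)) * mat_adjoint W) $$ (i, j)"
    unfolding unitary_conj_real_diag_entry[OF W i j] sum.lessThan_Suc_shift
    using i j col row U by (cases i; cases j) (auto simp: W_def lower_entry)
qed

lemma hermitian_lower_block:
  fixes B :: "complex mat"
  assumes B: "B \<in> carrier_mat (Suc n) (Suc n)" "mat_adjoint B = B"
  shows "mat_adjoint (mat n n (\<lambda>(i, j). B $$ (Suc i, Suc j))) = mat n n (\<lambda>(i, j). B $$ (Suc i, Suc j))"
    (is "mat_adjoint ?A = ?A")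
proof (rule eq_matI)
  have A: "?A \<in> carrier_mat n n" by simp
  fix i j assume "i < dim_row ?A" "j < dim_col ?A"
  then have ij: "i < n" "j < n" by auto
  then show "mat_adjoint ?A $$ (i, j) = ?A $$ (i, j)"
    unfolding mat_adjoint_entry[OF A ij] using hermitian_entry[OF B, of "Suc i" "Suc j"] by simp
qed (simp_all add: mat_adjoint_def)

lemma unitary_conj_cancel:
  fixes V A :: "complex mat"
  assumes V: "unitary_mat n V" and A: "A \<in> carrier_mat n n"
  shows "V * (mat_adjoint V * A * V) * mat_adjoint V = A"
proof -
  have Vm: "V \<in> carrier_mat n n" using V by (rule unitary_mat_carrier)
  have "V * (mat_adjoint V * A * V) * mat_adjoint V = (V * mat_adjoint V) * A * (V * mat_adjoint V)"
    using Vm A mat_adjoint_carrier[OF Vm] by (simp add: assoc_mult_mat[of _ n n _ n _ n])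
  then show ?thesis using V A unfolding unitary_mat_def by simp
qed

lemma mult_conj_mat_adjoint:
  fixes V W D :: "complex mat"
  assumes V: "V \<in> carrier_mat n n" and W: "W \<in> carrier_mat n n" and D: "D \<in> carrier_mat n n"
  shows "V * (W * D * mat_adjoint W) * mat_adjoint V = (V * W) * D * mat_adjoint (V * W)"
proof -
  note adj = mat_adjoint_carrier[OF V] mat_adjoint_carrier[OF W]
  have "V * (W * D * mat_adjoint W) * mat_adjoint V = V * (W * (D * (mat_adjoint W * mat_adjoint V)))"
    using V W D adj by (simp add: assoc_mult_mat[of _ n n _ n _ n])
  also have "\<dots> = (V * W) * D * (mat_adjoint W * mat_adjoint V)"
    using V W D adj by (simp add: assoc_mult_mat[of _ n n _ n _ n])
  finally show ?thesis by (simp add: mat_adjoint_mult[OF V W])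
qed

theorem hermitian_spectral_decomposition:
  fixes A :: "complex mat"
  assumes "A \<in> carrier_mat n n" "mat_adjoint A = A"
  shows "\<exists>U lam. unitary_mat n U \<and> A = U * real_diag_mat n lam * mat_adjoint U"
  using assms
proof (induction n arbitrary: A)
  case 0
  have "unitary_mat 0 (1\<^sub>m 0)" unfolding unitary_mat_def
    by (auto intro!: eq_matI simp: mat_adjoint_def)
  moreover have "A = 1\<^sub>m 0 * real_diag_mat 0 (\<lambda>_. 0) * mat_adjoint (1\<^sub>m 0)"
    using 0 by (intro eq_matI) (auto simp: mat_adjoint_def)
  ultimately show ?case by blast
next
  case (Suc n)
  note A = Suc.prems
  obtain y r \<mu> where y: "(\<Sum>i<Suc n. cnj (y i) * y i) = 1" "y 0 = complex_of_real r"
    and ev: "\<forall>k<Suc n. (\<Sum>l<Suc n. A $$ (k, l) * y l) = \<mu> * y k"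
    using unit_eigenvector_real_head[OF A(1)] by blast
  obtain V where V: "unitary_mat (Suc n) V" and V0: "\<forall>i<Suc n. V $$ (i, 0) = y i"
    using unitary_mat_with_first_col[OF y] by blast
  have Vm: "V \<in> carrier_mat (Suc n) (Suc n)" using V by (rule unitary_mat_carrier)
  define B where "B = mat_adjoint V * A * V"
  have ev_V: "\<And>k. k < Suc n \<Longrightarrow> (\<Sum>l<Suc n. A $$ (k, l) * V $$ (l, 0)) = \<mu> * V $$ (k, 0)"
    using ev V0 by simp
  note deflate = unitary_conj_first_eigencol[OF A V zero_less_Suc ev_V, folded B_def]
  define A' where "A' = mat n n (\<lambda>(i, j). B $$ (Suc i, Suc j))"
  have A': "A' \<in> carrier_mat n n" "mat_adjoint A' = A'"
    unfolding A'_def using hermitian_lower_block[OF deflate(1,2)] by simp_all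
  obtain U' lam' where U': "unitary_mat n U'" and A'_eq: "A' = U' * real_diag_mat n lam' * mat_adjoint U'"
    using Suc.IH[OF A'] by blast
  define W where "W = four_block_mat (1\<^sub>m 1) (0\<^sub>m 1 n) (0\<^sub>m n 1) U'"
  define D where "D = real_diag_mat (Suc n) (\<lambda>i. if i = 0 then Re \<mu> else lam' (i - 1))"
  have W: "unitary_mat (Suc n) W" unfolding W_def by (rule unitary_mat_four_block_one[OF U'])
  have Wm: "W \<in> carrier_mat (Suc n) (Suc n)" using W by (rule unitary_mat_carrier)
  have B_eq: "B = W * D * mat_adjoint W"
    unfolding W_def D_def
    by (rule four_block_one_conj_real_diag[OF deflate(1) _ _ unitary_mat_carrier[OF U'] A'_eq[unfolded A'_def]])
      (use deflate(3-5) in auto)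
  have "A = V * B * mat_adjoint V"
    unfolding B_def by (rule unitary_conj_cancel[OF V A(1), symmetric])
  also have "\<dots> = (V * W) * D * mat_adjoint (V * W)"
    unfolding B_eq D_def by (rule mult_conj_mat_adjoint[OF Vm Wm real_diag_mat_carrier])
  finally show ?case unfolding D_def using unitary_mat_mult[OF V W] by blast
qed

lemma pos_part_spectral:
  fixes A :: "complex mat"
  assumes A: "A \<in> carrier_mat n n" and herm: "mat_adjoint A = A"
  obtains U lam where "unitary_mat n U" "A = U * real_diag_mat n lam * mat_adjoint U"
    "pos_part A = U * real_diag_mat n (\<lambda>i. max (lam i) 0) * mat_adjoint U"
proof -
  have "\<exists>P U lam. unitary_mat (dim_row A) U \<and> A = U * real_diag_mat (dim_row A) lam * mat_adjoint U
      \<and> P = U * real_diag_mat (dim_row A) (\<lambda>i. max (lam i) 0) * mat_adjoint U"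
    using hermitian_spectral_decomposition[OF A herm] A by auto
  from someI_ex[OF this] show ?thesis
    using that A unfolding pos_part_def by auto
qed

definition col_qform :: "nat \<Rightarrow> complex mat \<Rightarrow> nat \<Rightarrow> complex mat \<Rightarrow> complex" where
  "col_qform n U i X = (\<Sum>s<n. \<Sum>t<n. cnj (U $$ (s, i)) * X $$ (s, t) * U $$ (t, i))"

lemma col_qform_eq_quadratic_form:
  assumes "U \<in> carrier_mat n n" "X \<in> carrier_mat n n" "i < n"
  shows "col_qform n U i X = conjugate (col U i) \<bullet> (X *\<^sub>v col U i)"
  using assms by (simp add: quadratic_form_sum col_qform_def)

lemma col_qform_linear:
  fixes X Y :: "complex mat"
  assumes "X \<in> carrier_mat n n" "Y \<in> carrier_mat n n"
  shows "col_qform n U i (a \<cdot>\<^sub>m X + b \<cdot>\<^sub>m Y) = a * col_qform n U i X + b * col_qform n U i Y"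
  using assms by (simp add: col_qform_def sum_distrib_left sum.distrib algebra_simps)

lemma col_qform_diff:
  fixes X Y :: "complex mat"
  assumes "X \<in> carrier_mat n n" "Y \<in> carrier_mat n n"
  shows "col_qform n U i (X - a \<cdot>\<^sub>m Y) = col_qform n U i X - a * col_qform n U i Y"
  using assms by (simp add: col_qform_def sum_distrib_left sum_subtractf[symmetric] algebra_simps)

lemma col_qform_unitary_conj_real_diag:
  assumes U: "unitary_mat n U" and i: "i < n"
  shows "col_qform n U i (U * real_diag_mat n f * mat_adjoint U) = complex_of_real (f i)"
proof -
  have Um: "U \<in> carrier_mat n n" using U by (rule unitary_mat_carrier)
  have "col_qform n U i (U * real_diag_mat n f * mat_adjoint U)
      = (\<Sum>s<n. \<Sum>t<n. \<Sum>k<n. (cnj (U $$ (s, i)) * U $$ (s, k)) * complex_of_real (f k)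
                                * (cnj (U $$ (t, k)) * U $$ (t, i)))"
    unfolding col_qform_def
    by (intro sum.cong refl) (simp add: unitary_conj_real_diag_entry[OF Um] sum_distrib_left sum_distrib_right mult_ac)
  also have "\<dots> = (\<Sum>k<n. (\<Sum>s<n. cnj (U $$ (s, i)) * U $$ (s, k)) * complex_of_real (f k)
                          * (\<Sum>t<n. cnj (U $$ (t, k)) * U $$ (t, i)))"
    by (subst sum.swap, subst (2) sum.swap) (simp add: sum_distrib_left sum_distrib_right mult_ac)
  also have "\<dots> = complex_of_real (f i)"
    using i by (simp add: unitary_mat_cols[OF U] if_distrib cong: if_cong)
  finally show ?thesis .
qed

lemma sum_col_qform:
  assumes U: "unitary_mat n U" and X: "X \<in> carrier_mat n n"
  shows "(\<Sum>i<n. col_qform n U i X) = mtrace X"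
proof -
  have "(\<Sum>i<n. col_qform n U i X) = (\<Sum>s<n. \<Sum>t<n. X $$ (s, t) * (\<Sum>i<n. U $$ (t, i) * cnj (U $$ (s, i))))"
    unfolding col_qform_def
    by (subst sum.swap, rule sum.cong[OF refl], subst sum.swap) (simp add: sum_distrib_left mult_ac)
  also have "\<dots> = mtrace X"
    using X by (simp add: unitary_mat_rows[OF U] mtrace_def if_distrib cong: if_cong)
  finally show ?thesis .
qed

lemma col_qform_real_diag:
  "col_qform n U i (real_diag_mat n d) = complex_of_real (\<Sum>k<n. (cmod (U $$ (k, i)))\<^sup>2 * d k)"
proof -
  have "col_qform n U i (real_diag_mat n d)
      = (\<Sum>s<n. \<Sum>t<n. if t = s then cnj (U $$ (s, i)) * complex_of_real (d s) * U $$ (s, i) else 0)"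
    unfolding col_qform_def by (intro sum.cong refl) (auto simp: real_diag_mat_entry)
  then show ?thesis by (simp add: cnj_mult_of_real_mult del: of_real_mult)
qed

section \<open>The hockey-stick divergence\<close>

lemma sum_max_0_stochastic_le:
  fixes x y :: "nat \<Rightarrow> real" and M :: "nat \<Rightarrow> nat \<Rightarrow> real"
  assumes xy: "\<And>i. i < n \<Longrightarrow> x i = (\<Sum>k<n. M i k * y k)"
    and nonneg: "\<And>i k. i < n \<Longrightarrow> k < n \<Longrightarrow> 0 \<le> M i k"
    and col_sum: "\<And>k. k < n \<Longrightarrow> (\<Sum>i<n. M i k) = 1"
  shows "(\<Sum>i<n. max (x i) 0) \<le> (\<Sum>k<n. max (y k) 0)"
proof -
  have "max (x i) 0 \<le> (\<Sum>k<n. M i k * max (y k) 0)" if i: "i < n" for i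
  proof -
    have "x i \<le> (\<Sum>k<n. M i k * max (y k) 0)" unfolding xy[OF i]
      by (rule sum_mono) (use nonneg i in \<open>auto intro: mult_left_mono\<close>)
    moreover have "0 \<le> (\<Sum>k<n. M i k * max (y k) 0)"
      by (rule sum_nonneg) (use nonneg i in auto)
    ultimately show ?thesis by simp
  qed
  then have "(\<Sum>i<n. max (x i) 0) \<le> (\<Sum>i<n. \<Sum>k<n. M i k * max (y k) 0)"
    by (intro sum_mono) auto
  also have "\<dots> = (\<Sum>k<n. (\<Sum>i<n. M i k) * max (y k) 0)"
    by (subst sum.swap) (simp add: sum_distrib_right)
  also have "\<dots> = (\<Sum>k<n. max (y k) 0)" using col_sum by simp
  finally show ?thesis .
qed

lemma mtrace_pos_part_real_diag:
  "Re (mtrace (pos_part (real_diag_mat n d))) = (\<Sum>k<n. max (d k) 0)"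
proof -
  obtain U lam where U: "unitary_mat n U" and D: "real_diag_mat n d = U * real_diag_mat n lam * mat_adjoint U"
    and P: "pos_part (real_diag_mat n d) = U * real_diag_mat n (\<lambda>i. max (lam i) 0) * mat_adjoint U"
    using pos_part_spectral[OF real_diag_mat_carrier mat_adjoint_real_diag_mat] by blast
  have Um: "U \<in> carrier_mat n n" using U by (rule unitary_mat_carrier)
  \<comment> \<open>d and lam are related by the doubly stochastic matrix |U k i|^2, in both directions\<close>
  define M where "M k i = (cmod (U $$ (k, i)))\<^sup>2" for k i
  have M_nonneg: "0 \<le> M k i" for k i by (simp add: M_def)
  have d_eq: "d k = (\<Sum>i<n. M k i * lam i)" if "k < n" for k
  proof -
    have "complex_of_real (d k) = complex_of_real (\<Sum>i<n. M k i * lam i)"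
      using unitary_conj_real_diag_diag_entry[OF Um that, of lam] that
      by (simp add: D[symmetric] real_diag_mat_entry M_def)
    then show ?thesis by (simp only: of_real_eq_iff)
  qed
  have lam_eq: "lam i = (\<Sum>k<n. M k i * d k)" if "i < n" for i
  proof -
    have "complex_of_real (lam i) = complex_of_real (\<Sum>k<n. M k i * d k)"
      using col_qform_real_diag[of n U i d] col_qform_unitary_conj_real_diag[OF U that, of lam]
      by (simp add: D M_def)
    then show ?thesis by (simp only: of_real_eq_iff)
  qed
  have "Re (mtrace (pos_part (real_diag_mat n d))) = (\<Sum>i<n. max (lam i) 0)"
    unfolding P mtrace_unitary_conj_real_diag[OF U] by simp
  moreover have "(\<Sum>i<n. max (lam i) 0) \<le> (\<Sum>k<n. max (d k) 0)"
    by (rule sum_max_0_stochastic_le[of n lam "\<lambda>i k. M k i" d]) (auto simp: lam_eq M_nonneg M_def unitary_mat_row_norm[OF U])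
  moreover have "(\<Sum>k<n. max (d k) 0) \<le> (\<Sum>i<n. max (lam i) 0)"
    by (rule sum_max_0_stochastic_le[of n d M lam]) (auto simp: d_eq M_nonneg M_def unitary_mat_col_norm[OF U])
  ultimately show ?thesis by linarith
qed

lemma E_div_real_diag:
  "E_div g (real_diag_mat n p) (real_diag_mat n q) = (\<Sum>r<n. max (p r - g * q r) 0)"
proof -
  have "real_diag_mat n p - complex_of_real g \<cdot>\<^sub>m real_diag_mat n q = real_diag_mat n (\<lambda>r. p r - g * q r)"
    by (rule eq_matI) (auto simp: real_diag_mat_def)
  then show ?thesis unfolding E_div_def by (simp add: mtrace_pos_part_real_diag)
qed

lemma density_op_carrier: "density_op n \<rho> \<Longrightarrow> \<rho> \<in> carrier_mat n n"
  unfolding density_op_def by auto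

lemma density_op_hermitian: "density_op n \<rho> \<Longrightarrow> mat_adjoint \<rho> = \<rho>"
  unfolding density_op_def psd_def hermitian_def by auto

lemma col_qform_density_op:
  assumes \<rho>: "density_op n \<rho>" and U: "unitary_mat n U" and i: "i < n"
  shows "col_qform n U i \<rho> = complex_of_real (Re (col_qform n U i \<rho>))" "0 \<le> Re (col_qform n U i \<rho>)"
proof -
  have Um: "U \<in> carrier_mat n n" using U by (rule unitary_mat_carrier)
  have "Im (col_qform n U i \<rho>) = 0 \<and> 0 \<le> Re (col_qform n U i \<rho>)"
    unfolding col_qform_eq_quadratic_form[OF Um density_op_carrier[OF \<rho>] i]
    using \<rho> Um by (auto simp: density_op_def psd_def)
  then show "col_qform n U i \<rho> = complex_of_real (Re (col_qform n U i \<rho>))" "0 \<le> Re (col_qform n U i \<rho>)"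
    by (auto simp: complex_eq_iff)
qed

lemma sum_col_qform_density_op:
  assumes "density_op n \<rho>" "unitary_mat n U"
  shows "(\<Sum>i<n. Re (col_qform n U i \<rho>)) = 1"
  using sum_col_qform[OF assms(2) density_op_carrier[OF assms(1)]] assms(1)
  by (simp add: density_op_def flip: Re_sum)

lemma E_div_one_eigenbasis:
  assumes \<rho>: "density_op n \<rho>" and \<sigma>: "density_op n \<sigma>"
  obtains U where "unitary_mat n U"
    "E_div 1 \<rho> \<sigma> = (\<Sum>i<n. max (Re (col_qform n U i \<rho>) - Re (col_qform n U i \<sigma>)) 0)"
proof -
  have \<rho>m: "\<rho> \<in> carrier_mat n n" and \<sigma>m: "\<sigma> \<in> carrier_mat n n"
    using \<rho> \<sigma> by (simp_all add: density_op_carrier)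
  define A where "A = \<rho> - complex_of_real 1 \<cdot>\<^sub>m \<sigma>"
  have Am: "A \<in> carrier_mat n n" unfolding A_def using \<sigma>m by (intro minus_carrier_mat smult_carrier_mat)
  have "mat_adjoint A = A"
  proof (rule eq_matI)
    fix i j assume "i < dim_row A" "j < dim_col A"
    then have ij: "i < n" "j < n" using Am by auto
    then show "mat_adjoint A $$ (i, j) = A $$ (i, j)"
      unfolding mat_adjoint_entry[OF Am ij]
      using hermitian_entry[OF \<rho>m density_op_hermitian[OF \<rho>] ij]
        hermitian_entry[OF \<sigma>m density_op_hermitian[OF \<sigma>] ij]
      using \<sigma>m by (simp add: A_def)
  qed (use Am mat_adjoint_carrier[OF Am] in auto)
  then obtain U lam where U: "unitary_mat n U" and AU: "A = U * real_diag_mat n lam * mat_adjoint U"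
    and PA: "pos_part A = U * real_diag_mat n (\<lambda>i. max (lam i) 0) * mat_adjoint U"
    using pos_part_spectral[OF Am] by blast
  have "lam i = Re (col_qform n U i \<rho>) - Re (col_qform n U i \<sigma>)" if i: "i < n" for i
  proof -
    have "complex_of_real (lam i) = col_qform n U i \<rho> - col_qform n U i \<sigma>"
      using col_qform_unitary_conj_real_diag[OF U i, of lam] col_qform_diff[OF \<rho>m \<sigma>m, of U i 1]
      by (simp add: AU[symmetric] A_def)
    then show ?thesis by (metis Re_complex_of_real minus_complex.sel(1))
  qed
  moreover have "E_div 1 \<rho> \<sigma> = (\<Sum>i<n. max (lam i) 0)"
    unfolding E_div_def A_def[symmetric] PA mtrace_unitary_conj_real_diag[OF U] by simp
  ultimately show ?thesis using that[OF U] by simp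
qed

lemma E_div_one_nonneg:
  assumes "density_op n \<rho>" "density_op n \<sigma>"
  shows "0 \<le> E_div 1 \<rho> \<sigma>"
proof -
  obtain U where "E_div 1 \<rho> \<sigma> = (\<Sum>i<n. max (Re (col_qform n U i \<rho>) - Re (col_qform n U i \<sigma>)) 0)"
    using E_div_one_eigenbasis[OF assms] by blast
  then show ?thesis by (simp add: sum_nonneg)
qed

section \<open>A locally private measure-and-randomize channel\<close>

text \<open>Measure in the orthonormal basis formed by the columns of U and, on outcome i, output the
  classical bit r with probability c r i.\<close>

definition outcome_weight ::
    "nat \<Rightarrow> complex mat \<Rightarrow> (nat \<Rightarrow> nat \<Rightarrow> real) \<Rightarrow> nat \<Rightarrow> complex mat \<Rightarrow> complex" where
  "outcome_weight n U c r X = (\<Sum>i<n. complex_of_real (c r i) * col_qform n U i X)"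

definition meas_channel ::
    "nat \<Rightarrow> complex mat \<Rightarrow> (nat \<Rightarrow> nat \<Rightarrow> real) \<Rightarrow> complex mat \<Rightarrow> complex mat" where
  "meas_channel n U c X = mat 2 2 (\<lambda>(r, s). if r = s then outcome_weight n U c r X else 0)"

lemma meas_channel_entry:
  "r < 2 \<Longrightarrow> s < 2 \<Longrightarrow> meas_channel n U c X $$ (r, s) = (if r = s then outcome_weight n U c r X else 0)"
  by (simp add: meas_channel_def)

lemma meas_channel_linear: "linear_map_on n 2 (meas_channel n U c)"
  unfolding linear_map_on_def
proof (intro conjI ballI allI)
  fix X Y :: "complex mat" and a b assume X: "X \<in> carrier_mat n n" and Y: "Y \<in> carrier_mat n n"
  show "meas_channel n U c (a \<cdot>\<^sub>m X + b \<cdot>\<^sub>m Y)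
      = a \<cdot>\<^sub>m meas_channel n U c X + b \<cdot>\<^sub>m meas_channel n U c Y"
    by (rule eq_matI)
      (auto simp: meas_channel_def outcome_weight_def col_qform_linear[OF X Y] sum_distrib_left sum.distrib
        algebra_simps)
qed (simp add: meas_channel_def)

lemma meas_channel_trace_preserving:
  assumes U: "unitary_mat n U" and c: "\<And>i. i < n \<Longrightarrow> c 0 i + c 1 i = 1"
  shows "trace_preserving n (meas_channel n U c)"
  unfolding trace_preserving_def
proof
  fix X :: "complex mat" assume X: "X \<in> carrier_mat n n"
  have "mtrace (meas_channel n U c X) = (\<Sum>i<n. complex_of_real (c 0 i + c 1 i) * col_qform n U i X)"
    by (simp add: mtrace_def meas_channel_def outcome_weight_def numeral_2_eq_2 sum.distrib algebra_simps)
  also have "\<dots> = mtrace X" using c by (simp add: sum_col_qform[OF U X])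
  finally show "mtrace (meas_channel n U c X) = mtrace X" .
qed

lemma meas_channel_density_op:
  assumes \<rho>: "density_op n \<rho>" and U: "unitary_mat n U"
  shows "meas_channel n U c \<rho> = real_diag_mat 2 (\<lambda>r. \<Sum>i<n. c r i * Re (col_qform n U i \<rho>))"
proof -
  have "outcome_weight n U c r \<rho> = complex_of_real (\<Sum>i<n. c r i * Re (col_qform n U i \<rho>))" for r
    unfolding outcome_weight_def of_real_sum
    by (intro sum.cong refl) (subst col_qform_density_op(1)[OF \<rho> U]; simp)
  then show ?thesis by (intro eq_matI) (auto simp: meas_channel_def real_diag_mat_def)
qed

lemma block_index_less:
  assumes "a < k" "s < n"
  shows "a * n + s < k * (n::nat)"
proof -
  have "a * n + s < Suc a * n" using assms(2) by simp
  also have "\<dots> \<le> k * n" using assms(1) by (intro mult_right_mono) auto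
  finally show ?thesis .
qed

lemma block_index_div_mod:
  assumes "s < (n::nat)"
  shows "(a * n + s) div n = a" "(a * n + s) mod n = s"
  using assms by (simp_all add: add.commute)

lemma col_qform_block_of:
  "col_qform n U i (block_of n X a b)
    = (\<Sum>s<n. \<Sum>t<n. cnj (U $$ (s, i)) * X $$ (a * n + s, b * n + t) * U $$ (t, i))"
  by (simp add: col_qform_def block_of_def)

lemma cnj_col_qform_block_of:
  fixes X :: "complex mat"
  assumes X: "X \<in> carrier_mat (k * n) (k * n)" "mat_adjoint X = X" and a: "a < k" and b: "b < k"
  shows "cnj (col_qform n U i (block_of n X b a)) = col_qform n U i (block_of n X a b)"
proof -
  have X_entry: "cnj (X $$ (b * n + s, a * n + t)) = X $$ (a * n + t, b * n + s)" if "s < n" "t < n" for s t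
    using hermitian_entry[OF X, of "a * n + t" "b * n + s"] that a b by (simp add: block_index_less)
  have "cnj (col_qform n U i (block_of n X b a))
      = (\<Sum>s<n. \<Sum>t<n. U $$ (s, i) * X $$ (a * n + t, b * n + s) * cnj (U $$ (t, i)))"
    unfolding col_qform_block_of cnj_sum by (intro sum.cong refl) (simp add: cnj_sum X_entry)
  also have "\<dots> = col_qform n U i (block_of n X a b)"
    unfolding col_qform_block_of by (subst sum.swap) (simp add: mult_ac)
  finally show ?thesis .
qed

lemma ampliate_meas_channel_entry:
  assumes "p < k * 2" "q < k * 2"
  shows "ampliate k n 2 (meas_channel n U c) X $$ (p, q) =
    (if p mod 2 = q mod 2 then outcome_weight n U c (p mod 2) (block_of n X (p div 2) (q div 2)) else 0)"
  using assms by (simp add: ampliate_def meas_channel_entry)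

lemma ampliate_meas_channel_hermitian:
  fixes X :: "complex mat"
  assumes X: "X \<in> carrier_mat (k * n) (k * n)" "mat_adjoint X = X"
  shows "mat_adjoint (ampliate k n 2 (meas_channel n U c) X) = ampliate k n 2 (meas_channel n U c) X"
    (is "mat_adjoint ?M = ?M")
proof (rule eq_matI)
  have M: "?M \<in> carrier_mat (k * 2) (k * 2)" by (simp add: ampliate_def)
  fix p q assume "p < dim_row ?M" "q < dim_col ?M"
  then have p: "p < k * 2" and q: "q < k * 2" using M by auto
  then have "p div 2 < k" "q div 2 < k" by auto
  then have ow: "cnj (outcome_weight n U c r (block_of n X (q div 2) (p div 2)))
      = outcome_weight n U c r (block_of n X (p div 2) (q div 2))" for r
    by (simp add: outcome_weight_def cnj_sum cnj_col_qform_block_of[OF X])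
  show "mat_adjoint ?M $$ (p, q) = ?M $$ (p, q)"
    unfolding mat_adjoint_entry[OF M p q] ampliate_meas_channel_entry[OF p q] ampliate_meas_channel_entry[OF q p]
    by (cases "p mod 2 = q mod 2") (simp_all add: ow)
qed (simp_all add: ampliate_def mat_adjoint_def)

lemma quadratic_form_block_vec:
  fixes X U :: "complex mat" and u :: "nat \<Rightarrow> complex" and i :: nat
  assumes X: "X \<in> carrier_mat (k * n) (k * n)"
  defines "w \<equiv> vec (k * n) (\<lambda>x. u (x div n) * U $$ (x mod n, i))"
  shows "conjugate w \<bullet> (X *\<^sub>v w) = (\<Sum>a<k. \<Sum>b<k. cnj (u a) * col_qform n U i (block_of n X a b) * u b)"
proof -
  have w: "w \<in> carrier_vec (k * n)" by (simp add: w_def)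
  have w_entry: "w $ (a * n + s) = u a * U $$ (s, i)" if "a < k" "s < n" for a s
    using that by (simp add: w_def block_index_less block_index_div_mod)
  have "conjugate w \<bullet> (X *\<^sub>v w)
      = (\<Sum>a<k. \<Sum>s<n. \<Sum>b<k. \<Sum>t<n. cnj (w $ (a * n + s)) * X $$ (a * n + s, b * n + t) * w $ (b * n + t))"
    by (simp only: quadratic_form_sum[OF X w] sum_lessThan_mult_split)
  also have "\<dots> = (\<Sum>a<k. \<Sum>s<n. \<Sum>b<k. \<Sum>t<n.
      cnj (u a) * (cnj (U $$ (s, i)) * X $$ (a * n + s, b * n + t) * U $$ (t, i)) * u b)"
    by (intro sum.cong refl) (simp add: w_entry mult_ac)
  also have "\<dots> = (\<Sum>a<k. \<Sum>b<k. \<Sum>s<n. \<Sum>t<n.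
      cnj (u a) * (cnj (U $$ (s, i)) * X $$ (a * n + s, b * n + t) * U $$ (t, i)) * u b)"
    by (rule sum.cong[OF refl], rule sum.swap)
  also have "\<dots> = (\<Sum>a<k. \<Sum>b<k. cnj (u a) * col_qform n U i (block_of n X a b) * u b)"
    unfolding col_qform_block_of by (simp add: sum_distrib_left sum_distrib_right)
  finally show ?thesis .
qed

lemma ampliate_meas_channel_quadratic_form:
  fixes X :: "complex mat"
  assumes X: "X \<in> carrier_mat (k * n) (k * n)" and v: "v \<in> carrier_vec (k * 2)"
  shows "conjugate v \<bullet> (ampliate k n 2 (meas_channel n U c) X *\<^sub>v v)
    = (\<Sum>r<2. \<Sum>i<n. complex_of_real (c r i)
         * (\<Sum>a<k. \<Sum>b<k. cnj (v $ (a * 2 + r)) * col_qform n U i (block_of n X a b) * v $ (b * 2 + r)))"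
proof -
  let ?M = "ampliate k n 2 (meas_channel n U c) X"
  let ?f = "\<lambda>r a b. cnj (v $ (a * 2 + r)) * outcome_weight n U c r (block_of n X a b) * v $ (b * 2 + r)"
  let ?g = "\<lambda>r i a b. complex_of_real (c r i) * (cnj (v $ (a * 2 + r)) * col_qform n U i (block_of n X a b) * v $ (b * 2 + r))"
  have M: "?M \<in> carrier_mat (k * 2) (k * 2)" by (simp add: ampliate_def)
  have M_entry: "?M $$ (a * 2 + r, b * 2 + r') = (if r = r' then outcome_weight n U c r (block_of n X a b) else 0)"
    if "a < k" "b < k" "r < 2" "r' < 2" for a b r r'
    using that by (simp add: ampliate_meas_channel_entry block_index_less block_index_div_mod)
  have "conjugate v \<bullet> (?M *\<^sub>v v)
      = (\<Sum>a<k. \<Sum>r<2. \<Sum>b<k. \<Sum>r'<2. cnj (v $ (a * 2 + r)) * ?M $$ (a * 2 + r, b * 2 + r') * v $ (b * 2 + r'))"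
    by (simp only: quadratic_form_sum[OF M v] sum_lessThan_mult_split)
  also have "\<dots> = (\<Sum>a<k. \<Sum>r<2. \<Sum>b<k. \<Sum>r'<2. if r' = r then ?f r a b else 0)"
    by (intro sum.cong refl) (auto simp: M_entry)
  also have "\<dots> = (\<Sum>a<k. \<Sum>r<2. \<Sum>b<k. ?f r a b)"
    by simp
  also have "\<dots> = (\<Sum>r<2. \<Sum>a<k. \<Sum>b<k. ?f r a b)"
    by (rule sum.swap)
  also have "\<dots> = (\<Sum>r<2. \<Sum>a<k. \<Sum>b<k. \<Sum>i<n. ?g r i a b)"
    unfolding outcome_weight_def by (simp add: sum_distrib_left sum_distrib_right mult_ac)
  also have "\<dots> = (\<Sum>r<2. \<Sum>i<n. \<Sum>a<k. \<Sum>b<k. ?g r i a b)"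
  proof (rule sum.cong[OF refl])
    fix r
    have "(\<Sum>a<k. \<Sum>b<k. \<Sum>i<n. ?g r i a b) = (\<Sum>a<k. \<Sum>i<n. \<Sum>b<k. ?g r i a b)"
      by (rule sum.cong[OF refl], rule sum.swap)
    also have "\<dots> = (\<Sum>i<n. \<Sum>a<k. \<Sum>b<k. ?g r i a b)"
      by (rule sum.swap)
    finally show "(\<Sum>a<k. \<Sum>b<k. \<Sum>i<n. ?g r i a b) = (\<Sum>i<n. \<Sum>a<k. \<Sum>b<k. ?g r i a b)" .
  qed
  also have "\<dots> = (\<Sum>r<2. \<Sum>i<n. complex_of_real (c r i)
         * (\<Sum>a<k. \<Sum>b<k. cnj (v $ (a * 2 + r)) * col_qform n U i (block_of n X a b) * v $ (b * 2 + r)))"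
    by (simp add: sum_distrib_left)
  finally show ?thesis .
qed

lemma meas_channel_completely_positive:
  assumes c: "\<And>r i. 0 \<le> c r i"
  shows "completely_positive n 2 (meas_channel n U c)"
  unfolding completely_positive_def
proof (intro allI ballI impI)
  fix k and X :: "complex mat"
  assume X: "X \<in> carrier_mat (k * n) (k * n)" and psd: "psd X"
  let ?M = "ampliate k n 2 (meas_channel n U c) X"
  have M: "?M \<in> carrier_mat (k * 2) (k * 2)" by (simp add: ampliate_def)
  have herm: "mat_adjoint X = X" using psd X unfolding psd_def hermitian_def by auto
  have "Im (conjugate v \<bullet> (?M *\<^sub>v v)) = 0 \<and> 0 \<le> Re (conjugate v \<bullet> (?M *\<^sub>v v))"
    if v: "v \<in> carrier_vec (k * 2)" for v
  proof -
    define w where "w r i = vec (k * n) (\<lambda>x. v $ (x div n * 2 + r) * U $$ (x mod n, i))" for r i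
    have w_psd: "Im (conjugate (w r i) \<bullet> (X *\<^sub>v w r i)) = 0 \<and> 0 \<le> Re (conjugate (w r i) \<bullet> (X *\<^sub>v w r i))"
      for r i using psd X unfolding psd_def by (auto simp: w_def)
    have "conjugate (w r i) \<bullet> (X *\<^sub>v w r i)
        = (\<Sum>a<k. \<Sum>b<k. cnj (v $ (a * 2 + r)) * col_qform n U i (block_of n X a b) * v $ (b * 2 + r))" for r i
      using quadratic_form_block_vec[OF X, of "\<lambda>a. v $ (a * 2 + r)" U i] by (simp add: w_def)
    then have "conjugate v \<bullet> (?M *\<^sub>v v)
        = (\<Sum>r<2. \<Sum>i<n. complex_of_real (c r i) * (conjugate (w r i) \<bullet> (X *\<^sub>v w r i)))"
      by (simp add: ampliate_meas_channel_quadratic_form[OF X v])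
    then show ?thesis using w_psd c by (simp add: Im_sum Re_sum sum_nonneg)
  qed
  then show "psd ?M"
    unfolding psd_def hermitian_def using M ampliate_meas_channel_hermitian[OF X herm] by auto
qed

lemma sum_mult_le_scaled_sum_mult:
  fixes a b f :: "nat \<Rightarrow> real"
  assumes a: "\<And>i. i < n \<Longrightarrow> 0 \<le> a i" "(\<Sum>i<n. a i) = 1"
    and b: "\<And>j. j < n \<Longrightarrow> 0 \<le> b j" "(\<Sum>j<n. b j) = 1"
    and f: "\<And>i j. i < n \<Longrightarrow> j < n \<Longrightarrow> f i \<le> g * f j"
  shows "(\<Sum>i<n. f i * a i) \<le> g * (\<Sum>j<n. f j * b j)"
proof -
  have "f i \<le> g * (\<Sum>j<n. f j * b j)" if i: "i < n" for i
  proof -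
    have "f i = (\<Sum>j<n. f i * b j)" using b(2) by (simp flip: sum_distrib_left)
    also have "\<dots> \<le> (\<Sum>j<n. g * f j * b j)"
      by (rule sum_mono) (use f i b in \<open>auto intro: mult_right_mono\<close>)
    finally show ?thesis by (simp add: sum_distrib_left mult_ac)
  qed
  then have "(\<Sum>i<n. f i * a i) \<le> (\<Sum>i<n. g * (\<Sum>j<n. f j * b j) * a i)"
    by (intro sum_mono) (use a in \<open>auto intro: mult_right_mono\<close>)
  also have "\<dots> = g * (\<Sum>j<n. f j * b j)" using a(2) by (simp flip: sum_distrib_left)
  finally show ?thesis .
qed

lemma meas_channel_LDP:
  assumes U: "unitary_mat n U" and c_nonneg: "\<And>r i. 0 \<le> c r i"
    and c_sum: "\<And>i. i < n \<Longrightarrow> c 0 i + c 1 i = 1"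
    and c_ratio: "\<And>r i j. i < n \<Longrightarrow> j < n \<Longrightarrow> c r i \<le> exp \<epsilon> * c r j"
  shows "LDP \<epsilon> n 2 (meas_channel n U c)"
  unfolding LDP_def cptp_def
proof (intro conjI allI impI meas_channel_linear meas_channel_completely_positive
    meas_channel_trace_preserving[OF U c_sum] c_nonneg)
  fix \<rho> \<sigma> assume \<rho>: "density_op n \<rho>" and \<sigma>: "density_op n \<sigma>"
  have "(\<Sum>i<n. c r i * Re (col_qform n U i \<rho>)) \<le> exp \<epsilon> * (\<Sum>i<n. c r i * Re (col_qform n U i \<sigma>))" for r
    using col_qform_density_op(2)[OF \<rho> U] col_qform_density_op(2)[OF \<sigma> U]
      sum_col_qform_density_op[OF \<rho> U] sum_col_qform_density_op[OF \<sigma> U] c_ratio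
    by (intro sum_mult_le_scaled_sum_mult) auto
  then show "E_div (exp \<epsilon>) (meas_channel n U c \<rho>) (meas_channel n U c \<sigma>) = 0"
    by (simp add: meas_channel_density_op[OF \<rho> U] meas_channel_density_op[OF \<sigma> U] E_div_real_diag)
qed

text \<open>Bit 0 means "the eigenvalue lam i is positive"; it is reported truthfully with
  probability e / (e + 1).\<close>

definition randomized_response :: "real \<Rightarrow> (nat \<Rightarrow> real) \<Rightarrow> nat \<Rightarrow> nat \<Rightarrow> real" where
  "randomized_response e lam r i = (if (r = 0) = (0 < lam i) then e else 1) / (e + 1)"

lemma randomized_response_nonneg: "0 \<le> e \<Longrightarrow> 0 \<le> randomized_response e lam r i"
  by (simp add: randomized_response_def)

lemma randomized_response_sum:
  "0 \<le> e \<Longrightarrow> randomized_response e lam 0 i + randomized_response e lam 1 i = 1"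
  by (simp add: randomized_response_def add_divide_distrib[symmetric])

lemma randomized_response_le:
  assumes "1 \<le> e"
  shows "randomized_response e lam r i \<le> e * randomized_response e lam r j"
proof -
  have "randomized_response e lam r i \<le> e * (1 / (e + 1))"
    using assms by (auto simp: randomized_response_def divide_right_mono)
  also have "\<dots> \<le> e * randomized_response e lam r j"
    using assms by (intro mult_left_mono) (auto simp: randomized_response_def divide_right_mono)
  finally show ?thesis .
qed

lemma randomized_response_bias:
  assumes "0 \<le> e" and "(\<Sum>i<n. lam i) = 0"
  shows "(\<Sum>i<n. randomized_response e lam 0 i * lam i) = (e - 1) / (e + 1) * (\<Sum>i<n. max (lam i) 0)"
proof -
  have "(\<Sum>i<n. randomized_response e lam 0 i * lam i) = (\<Sum>i<n. lam i + (e - 1) * max (lam i) 0) / (e + 1)"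
    unfolding sum_divide_distrib using assms(1)
    by (intro sum.cong refl) (auto simp: randomized_response_def field_simps max_def)
  also have "\<dots> = (e - 1) / (e + 1) * (\<Sum>i<n. max (lam i) 0)"
    using assms(2) by (simp add: sum.distrib sum_distrib_left sum_divide_distrib)
  finally show ?thesis .
qed

lemma sum_stochastic_mix:
  fixes a :: "nat \<Rightarrow> real"
  assumes "(\<Sum>i<n. a i) = 1" "\<And>i. i < n \<Longrightarrow> c 0 i + c 1 i = 1"
  shows "(\<Sum>i<n. c 0 i * a i) + (\<Sum>i<n. c 1 i * a i) = 1"
proof -
  have "(\<Sum>i<n. c 0 i * a i) + (\<Sum>i<n. c 1 i * a i) = (\<Sum>i<n. (c 0 i + c 1 i) * a i)"
    by (simp add: sum.distrib algebra_simps)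
  then show ?thesis using assms by simp
qed

lemma private_helstrom_channel:
  assumes \<epsilon>: "0 < \<epsilon>" and \<rho>: "density_op n \<rho>" and \<sigma>: "density_op n \<sigma>"
  obtains \<Phi> p q where "LDP \<epsilon> n 2 \<Phi>" "\<Phi> \<rho> = real_diag_mat 2 p" "\<Phi> \<sigma> = real_diag_mat 2 q"
    "\<forall>r. 0 \<le> p r" "p 0 + p 1 = 1" "\<forall>r. 0 \<le> q r" "q 0 + q 1 = 1"
    "p 0 - q 0 = (exp \<epsilon> - 1) / (exp \<epsilon> + 1) * E_div 1 \<rho> \<sigma>"
proof -
  obtain U where U: "unitary_mat n U"
    and E: "E_div 1 \<rho> \<sigma> = (\<Sum>i<n. max (Re (col_qform n U i \<rho>) - Re (col_qform n U i \<sigma>)) 0)"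
    using E_div_one_eigenbasis[OF \<rho> \<sigma>] by blast
  define a where "a i = Re (col_qform n U i \<rho>)" for i
  define b where "b i = Re (col_qform n U i \<sigma>)" for i
  define c where "c = randomized_response (exp \<epsilon>) (\<lambda>i. a i - b i)"
  have a: "\<And>i. i < n \<Longrightarrow> 0 \<le> a i" "(\<Sum>i<n. a i) = 1"
    unfolding a_def using col_qform_density_op(2)[OF \<rho> U] sum_col_qform_density_op[OF \<rho> U] by auto
  have b: "\<And>i. i < n \<Longrightarrow> 0 \<le> b i" "(\<Sum>i<n. b i) = 1"
    unfolding b_def using col_qform_density_op(2)[OF \<sigma> U] sum_col_qform_density_op[OF \<sigma> U] by auto
  have c: "\<And>r i. 0 \<le> c r i" "\<And>i. i < n \<Longrightarrow> c 0 i + c 1 i = 1"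
    "\<And>r i j. c r i \<le> exp \<epsilon> * c r j"
    unfolding c_def using \<epsilon>
    by (simp_all only: randomized_response_nonneg randomized_response_sum randomized_response_le
        exp_ge_zero one_le_exp_iff less_imp_le)
  define p where "p = (\<lambda>r. \<Sum>i<n. c r i * a i)"
  define q where "q = (\<lambda>r. \<Sum>i<n. c r i * b i)"
  have channel: "meas_channel n U c \<rho> = real_diag_mat 2 p" "meas_channel n U c \<sigma> = real_diag_mat 2 q"
    by (simp_all add: meas_channel_density_op[OF \<rho> U] meas_channel_density_op[OF \<sigma> U] p_def q_def
        a_def b_def)
  have p_nonneg: "\<forall>r. 0 \<le> p r" unfolding p_def using a(1) c(1) by (auto intro: sum_nonneg)
  have p_sum: "p 0 + p 1 = 1" unfolding p_def by (rule sum_stochastic_mix) (use a(2) c(2) in auto)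
  have q_nonneg: "\<forall>r. 0 \<le> q r" unfolding q_def using b(1) c(1) by (auto intro: sum_nonneg)
  have q_sum: "q 0 + q 1 = 1" unfolding q_def by (rule sum_stochastic_mix) (use b(2) c(2) in auto)
  have "p 0 - q 0 = (\<Sum>i<n. c 0 i * (a i - b i))"
    by (simp add: p_def q_def sum_subtractf[symmetric] algebra_simps)
  then have "p 0 - q 0 = (exp \<epsilon> - 1) / (exp \<epsilon> + 1) * E_div 1 \<rho> \<sigma>"
    using a(2) b(2) by (simp add: c_def randomized_response_bias sum_subtractf E a_def b_def)
  with meas_channel_LDP[OF U c] channel p_nonneg p_sum q_nonneg q_sum show ?thesis by (rule that)
qed

section \<open>Repeated binary experiments\<close>

text \<open>Indices of the 2^m-dimensional tensor power are read in binary, the least significant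
  digit belonging to the last tensor factor.\<close>

fun bin_prod :: "(nat \<Rightarrow> real) \<Rightarrow> nat \<Rightarrow> nat \<Rightarrow> real" where
  "bin_prod f 0 = (\<lambda>_. 1)"
| "bin_prod f (Suc m) = (\<lambda>k. bin_prod f m (k div 2) * f (k mod 2))"

lemma tensor_pow_real_diag_mat: "tensor_pow (real_diag_mat 2 f) m = real_diag_mat (2 ^ m) (bin_prod f m)"
proof (induction m)
  case 0
  show ?case by (rule eq_matI) (auto simp: real_diag_mat_def)
next
  case (Suc m)
  show ?case unfolding tensor_pow.simps Suc
  proof (rule eq_matI)
    fix i j assume "i < dim_row (real_diag_mat (2 ^ Suc m) (bin_prod f (Suc m)))"
      "j < dim_col (real_diag_mat (2 ^ Suc m) (bin_prod f (Suc m)))"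
    then have i: "i < 2 ^ m * 2" and j: "j < 2 ^ m * 2" by (auto simp: real_diag_mat_def)
    have "(i div 2 = j div 2 \<and> i mod 2 = j mod 2) = (i = j)" by (metis div_mod_decomp)
    then show "kron (real_diag_mat (2 ^ m) (bin_prod f m)) (real_diag_mat 2 f) $$ (i, j)
        = real_diag_mat (2 ^ Suc m) (bin_prod f (Suc m)) $$ (i, j)"
      using i j by (auto simp: kron_def real_diag_mat_def)
  qed (auto simp: kron_def real_diag_mat_def)
qed

lemma sum_div_mod_2:
  fixes g h :: "nat \<Rightarrow> real"
  shows "(\<Sum>k<2 ^ Suc m. g (k div 2) * h (k mod 2)) = (\<Sum>k<2 ^ m. g k) * (h 0 + h 1)"
proof -
  have "(\<Sum>k<2 ^ Suc m. g (k div 2) * h (k mod 2)) = (\<Sum>a<2 ^ m. \<Sum>s<2. g ((a * 2 + s) div 2) * h ((a * 2 + s) mod 2))"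
    by (simp only: power_Suc2 sum_lessThan_mult_split)
  also have "\<dots> = (\<Sum>a<2 ^ m. g a * (h 0 + h 1))"
  proof (rule sum.cong[OF refl])
    fix a
    have "{..<2::nat} = {0, 1}" by auto
    then show "(\<Sum>s<2. g ((a * 2 + s) div 2) * h ((a * 2 + s) mod 2)) = g a * (h 0 + h 1)"
      by (simp add: algebra_simps)
  qed
  finally show ?thesis by (simp add: sum_distrib_right)
qed

lemma bin_prod_nonneg: "(\<And>r. 0 \<le> f r) \<Longrightarrow> 0 \<le> bin_prod f m k"
  by (induction m arbitrary: k) auto

lemma sum_bin_prod: "(\<Sum>k<2 ^ m. bin_prod f m k) = (f 0 + f 1) ^ m"
proof (induction m)
  case (Suc m)
  then show ?case using sum_div_mod_2[of "bin_prod f m" f m] by simp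
qed simp

lemma sum_sqrt_bin_prod:
  assumes "\<And>r. 0 \<le> p r" "\<And>r. 0 \<le> q r"
  shows "(\<Sum>k<2 ^ m. sqrt (bin_prod p m k * bin_prod q m k)) = (sqrt (p 0 * q 0) + sqrt (p 1 * q 1)) ^ m"
proof (induction m)
  case (Suc m)
  have "(\<Sum>k<2 ^ Suc m. sqrt (bin_prod p (Suc m) k * bin_prod q (Suc m) k))
      = (\<Sum>k<2 ^ Suc m. sqrt (bin_prod p m (k div 2) * bin_prod q m (k div 2)) * sqrt (p (k mod 2) * q (k mod 2)))"
    by (simp add: real_sqrt_mult[symmetric] mult_ac)
  then show ?case using sum_div_mod_2[of "\<lambda>k. sqrt (bin_prod p m k * bin_prod q m k)" "\<lambda>r. sqrt (p r * q r)" m] Suc by simp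
qed simp

lemma min_le_sqrt_mult:
  fixes a b :: real
  assumes "0 \<le> a" "0 \<le> b"
  shows "min a b \<le> sqrt (a * b)"
proof (rule real_le_rsqrt)
  show "(min a b)\<^sup>2 \<le> a * b"
    using assms by (cases "a \<le> b") (auto simp: power2_eq_square intro: mult_mono)
qed

lemma p_err_tensor_pow_real_diag_le:
  assumes p: "\<And>r. 0 \<le> p r" "p 0 + p 1 = 1" and q: "\<And>r. 0 \<le> q r"
  shows "p_err (tensor_pow (real_diag_mat 2 p) m) (tensor_pow (real_diag_mat 2 q) m) (1/2)
     \<le> 1/2 * (sqrt (p 0 * q 0) + sqrt (p 1 * q 1)) ^ m"
proof -
  let ?P = "bin_prod p m" and ?Q = "bin_prod q m"
  have "(\<Sum>k<2 ^ m. max (?P k - 1 * ?Q k) 0) = (\<Sum>k<2 ^ m. ?P k - min (?P k) (?Q k))"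
    by (intro sum.cong refl) (simp add: max_def min_def)
  also have "\<dots> = (\<Sum>k<2 ^ m. ?P k) - (\<Sum>k<2 ^ m. min (?P k) (?Q k))"
    by (rule sum_subtractf)
  also have "\<dots> \<ge> 1 - (\<Sum>k<2 ^ m. sqrt (?P k * ?Q k))"
    using p(2) by (simp add: sum_bin_prod sum_mono min_le_sqrt_mult bin_prod_nonneg p(1) q)
  finally show ?thesis
    by (simp add: p_err_def tensor_pow_real_diag_mat E_div_real_diag sum_sqrt_bin_prod[OF p(1) q])
qed

lemma bhattacharyya_le:
  fixes p q :: real
  assumes p: "0 \<le> p" "p \<le> 1" and q: "0 \<le> q" "q \<le> 1"
  shows "sqrt (p * q) + sqrt ((1 - p) * (1 - q)) \<le> sqrt (1 - (p - q)\<^sup>2)"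
proof (rule real_le_rsqrt)
  have "sqrt (p * q) * sqrt ((1 - p) * (1 - q)) = sqrt ((p * (1 - p)) * (q * (1 - q)))"
    by (simp add: real_sqrt_mult[symmetric] mult_ac)
  also have "\<dots> \<le> (p * (1 - p) + q * (1 - q)) / 2"
    by (rule arith_geo_mean_sqrt) (use p q in auto)
  finally have cross: "sqrt (p * q) * sqrt ((1 - p) * (1 - q)) \<le> (p * (1 - p) + q * (1 - q)) / 2" .
  have "(sqrt (p * q) + sqrt ((1 - p) * (1 - q)))\<^sup>2
      = p * q + (1 - p) * (1 - q) + 2 * (sqrt (p * q) * sqrt ((1 - p) * (1 - q)))"
    using p q by (simp add: power2_sum)
  also have "\<dots> \<le> 1 - (p - q)\<^sup>2"
    using cross by (simp add: power2_eq_square algebra_simps)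
  finally show "(sqrt (p * q) + sqrt ((1 - p) * (1 - q)))\<^sup>2 \<le> 1 - (p - q)\<^sup>2" .
qed

section \<open>Sample complexity\<close>

lemma ln_one_minus_le:
  fixes x :: real
  assumes "0 \<le> x" "x < 1"
  shows "ln (1 - x) \<le> - x - x\<^sup>2 / 2"
proof -
  define f where "f u = ln (1 - u) + u + u\<^sup>2 / 2" for u :: real
  have "f x \<le> f 0"
  proof (rule DERIV_nonpos_imp_nonincreasing[OF assms(1)])
    fix u assume u: "0 \<le> u" "u \<le> x"
    then have "u < 1" using assms(2) by simp
    have "DERIV f u :> (- 1 / (1 - u) + 1 + u)"
      unfolding f_def using \<open>u < 1\<close>
      by (auto intro!: derivative_eq_intros simp: power2_eq_square field_simps)
    moreover have "(1 + u) * (1 - u) \<le> 1" by (simp add: algebra_simps)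
    then have "- 1 / (1 - u) + 1 + u \<le> 0" using \<open>u < 1\<close> by (simp add: field_simps)
    ultimately show "\<exists>y. DERIV f u :> y \<and> y \<le> 0" by blast
  qed
  then show ?thesis unfolding f_def by simp
qed

lemma ln_5_ge: "3 / 2 \<le> ln (5::real)"
proof -
  have "exp (1/8 :: real) \<le> 73/64" using exp_bound[of "1/8::real"] by (simp add: power2_eq_square)
  then have "exp (1/8 :: real) ^ 12 \<le> (73/64) ^ 12" by (rule power_mono) simp
  also have "(73/64 :: real) ^ 12 \<le> 5" by (simp add: power_divide)
  finally have "exp (3/2 :: real) \<le> 5" by (simp add: exp_of_nat_mult[symmetric])
  then show ?thesis by (subst ln_ge_iff) auto
qed

lemma exists_sample_size:
  fixes t :: real
  assumes t: "0 < t" "t \<le> 1"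
  obtains m :: nat where "real m \<le> 2 * ln 5 / t\<^sup>2" "(sqrt (1 - t\<^sup>2)) ^ m \<le> 1/5"
proof (cases "t = 1")
  case True
  then show ?thesis using that[of 1] ln_5_ge by simp
next
  case False
  define x where "x = t\<^sup>2"
  have x: "0 < x" "x < 1" unfolding x_def using t False by (auto simp: power_less_one_iff)
  define m where "m = nat \<lfloor>2 * ln 5 / x\<rfloor>"
  have "2 * ln 5 / x \<ge> 1" using x ln_5_ge by (simp add: field_simps)
  then have m: "real m \<le> 2 * ln 5 / x" "2 * ln 5 / x - 1 \<le> real m" unfolding m_def by linarith+
  \<comment> \<open>the quadratic term of ln (1 - x) pays for rounding 2 ln 5 / x down\<close>
  have "2 * ln 5 \<le> real m * (x + x\<^sup>2 / 2)"
  proof -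
    have "(2 * ln 5 / x - 1) * (x + x\<^sup>2 / 2) = 2 * ln 5 + x * (ln 5 - 1 - x / 2)"
      using x by (simp add: field_simps power2_eq_square)
    moreover have "0 \<le> x * (ln 5 - 1 - x / 2)" using x ln_5_ge by simp
    moreover have "(2 * ln 5 / x - 1) * (x + x\<^sup>2 / 2) \<le> real m * (x + x\<^sup>2 / 2)"
      using m(2) x by (intro mult_right_mono) auto
    ultimately show ?thesis by linarith
  qed
  moreover have "real m * ln (1 - x) \<le> real m * (- x - x\<^sup>2 / 2)"
    using ln_one_minus_le[of x] x by (intro mult_left_mono) auto
  ultimately have "real m * ln (1 - x) \<le> - 2 * ln 5"
    by (simp add: algebra_simps)
  moreover have "(1 - x) ^ m = exp (real m * ln (1 - x))"
    using x by (simp add: exp_of_nat_mult)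
  ultimately have "(1 - x) ^ m \<le> exp (- 2 * ln 5)"
    by simp
  moreover have "exp (2 * ln 5) = (25 :: real)"
    using exp_of_nat_mult[of 2 "ln (5::real)"] by simp
  ultimately have "(1 - x) ^ m \<le> (1/5)\<^sup>2"
    by (simp add: exp_minus power2_eq_square)
  then have "sqrt ((1 - x) ^ m) \<le> 1/5"
    using real_sqrt_le_mono by fastforce
  then show ?thesis using that m(1) unfolding x_def by (simp add: real_sqrt_power)
qed

lemma n_B_le:
  assumes "p_err (tensor_pow \<rho> m) (tensor_pow \<sigma> m) p \<le> \<delta>"
  shows "n_B \<rho> \<sigma> p \<delta> \<le> ereal (real m)"
  unfolding n_B_def by (rule INF_lower) (use assms in simp)

lemma n_B_priv_le_n_B:
  assumes "LDP \<epsilon> dA dB \<Phi>"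
  shows "n_B_priv \<epsilon> dA \<rho> \<sigma> p \<delta> \<le> n_B (\<Phi> \<rho>) (\<Phi> \<sigma>) p \<delta>"
  unfolding n_B_priv_def by (rule INF_lower2[of "(dB, \<Phi>)"]) (use assms in auto)

lemma n_B_binary_le:
  assumes p: "\<forall>r. 0 \<le> p r" "p 0 + p 1 = 1" and q: "\<forall>r. 0 \<le> q r" "q 0 + q 1 = 1"
    and t: "0 < p 0 - q 0"
  shows "n_B (real_diag_mat 2 p) (real_diag_mat 2 q) (1/2) (1/10) \<le> ereal (2 * ln 5 / (p 0 - q 0)\<^sup>2)"
proof -
  have "p 0 - q 0 \<le> 1" using p(2) spec[OF p(1), of 1] spec[OF q(1), of 0] by linarith
  then obtain m :: nat where m: "real m \<le> 2 * ln 5 / (p 0 - q 0)\<^sup>2" "(sqrt (1 - (p 0 - q 0)\<^sup>2)) ^ m \<le> 1/5"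
    using exists_sample_size[OF t] by blast
  have BC: "sqrt (p 0 * q 0) + sqrt (p 1 * q 1) \<le> sqrt (1 - (p 0 - q 0)\<^sup>2)"
    using bhattacharyya_le[of "p 0" "q 0"] p q by (simp add: eq_diff_eq[symmetric] add.commute)
  have "p_err (tensor_pow (real_diag_mat 2 p) m) (tensor_pow (real_diag_mat 2 q) m) (1/2)
      \<le> 1/2 * (sqrt (p 0 * q 0) + sqrt (p 1 * q 1)) ^ m"
    by (rule p_err_tensor_pow_real_diag_le) (use p q in auto)
  also have "\<dots> \<le> 1/2 * (sqrt (1 - (p 0 - q 0)\<^sup>2)) ^ m"
    using BC p(1) q(1) by (intro mult_left_mono power_mono) auto
  also have "\<dots> \<le> 1/10" using m(2) by simp
  finally have "n_B (real_diag_mat 2 p) (real_diag_mat 2 q) (1/2) (1/10) \<le> ereal (real m)"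
    by (rule n_B_le)
  also have "\<dots> \<le> ereal (2 * ln 5 / (p 0 - q 0)\<^sup>2)" using m(1) by simp
  finally show ?thesis .
qed

theorem mainTheorem2:
  fixes \<epsilon> :: real and dA :: nat and \<rho> \<sigma> :: "complex mat"
  assumes "\<epsilon> > 0"
    and "density_op dA \<rho>" and "density_op dA \<sigma>"
  shows "n_B_priv \<epsilon> dA \<rho> \<sigma> (1/2) (1/10) \<le>
    (if E_div 1 \<rho> \<sigma> = 0 then \<infinity>
     else ereal (((exp \<epsilon> + 1) / (exp \<epsilon> - 1))^2 * (2 * ln 5) / (E_div 1 \<rho> \<sigma>)^2))"
proof (cases "E_div 1 \<rho> \<sigma> = 0")
  case False
  obtain \<Phi> p q where \<Phi>: "LDP \<epsilon> dA 2 \<Phi>" "\<Phi> \<rho> = real_diag_mat 2 p" "\<Phi> \<sigma> = real_diag_mat 2 q"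
    and prob: "\<forall>r. 0 \<le> p r" "p 0 + p 1 = 1" "\<forall>r. 0 \<le> q r" "q 0 + q 1 = 1"
    and t: "p 0 - q 0 = (exp \<epsilon> - 1) / (exp \<epsilon> + 1) * E_div 1 \<rho> \<sigma>"
    using private_helstrom_channel[OF assms] by blast
  have "0 < E_div 1 \<rho> \<sigma>" using False E_div_one_nonneg[OF assms(2,3)] by simp
  moreover have "1 < exp \<epsilon>" using \<open>\<epsilon> > 0\<close> by simp
  ultimately have "0 < p 0 - q 0"
    unfolding t by (intro mult_pos_pos divide_pos_pos) (auto intro: add_pos_pos)
  have "n_B_priv \<epsilon> dA \<rho> \<sigma> (1/2) (1/10) \<le> n_B (\<Phi> \<rho>) (\<Phi> \<sigma>) (1/2) (1/10)"
    by (rule n_B_priv_le_n_B[OF \<Phi>(1)])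
  also have "\<dots> \<le> ereal (2 * ln 5 / (p 0 - q 0)\<^sup>2)"
    unfolding \<Phi>(2,3) by (rule n_B_binary_le[OF prob \<open>0 < p 0 - q 0\<close>])
  also have "\<dots> = ereal (((exp \<epsilon> + 1) / (exp \<epsilon> - 1))\<^sup>2 * (2 * ln 5) / (E_div 1 \<rho> \<sigma>)\<^sup>2)"
    unfolding t by (simp add: field_simps power2_eq_square)
  finally show ?thesis using False by simp
qed simp

end
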